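(* Let $u$ be a set, $F,G$ conjunctive set transformers on $u$ with $F(u)=u$ and $G(u)=u$, and let $p,q\subseteq u$ satisfy $p\cap\overline{q}\subseteq F(p\cup q)$, $p\cap\overline{q}\subseteq\mathrm{grd}(G)$ and $p\cap\overline{q}\subseteq G(q)$. Then $p\cup q\subseteq X(q)(q)$, where $X(q)$ is the fair iteration defined in the context.
   Context: A set transformer on $u$ is a map $E:\mathbb{P}(u)\to\mathbb{P}(u)$; it is conjunctive if it preserves intersections of nonempty families of subsets (in particular it is monotone). For $a\subseteq u$, $\overline{a}=u\setminus a$; $\mathrm{grd}(E)=\overline{E(\varnothing)}$. The fair iteration $X(q)=\overline{q}\Longrightarrow((F\,;X(q))\mathrel{\triangledown} G)$ (guarded command, sequencing, and dovetail/fair choice) is the set transformer $X(q)(r)={\cal L}(X(q))(r)\cap\mathrm{pre}(X(q))$ where: the liberal part ${\cal L}(X(q))(r)$ is the greatest fixpoint of the monotone map $Y\mapsto q\cup(G(r)\cap F(Y))$ on $\mathbb{P}(u)$, and the termination set $\mathrm{pre}(X(q))$ is the least fixpoint of the monotone map $Y\mapsto q\cup\mathrm{grd}(G)\cup F(Y)$. *)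

theory Defs
  imports Main
begin

definition set_transformer :: "'a set \<Rightarrow> ('a set \<Rightarrow> 'a set) \<Rightarrow> bool" where
  "set_transformer u E \<longleftrightarrow> (\<forall>a. a \<subseteq> u \<longrightarrow> E a \<subseteq> u)"

definition conjunctive :: "'a set \<Rightarrow> ('a set \<Rightarrow> 'a set) \<Rightarrow> bool" where
  "conjunctive u E \<longleftrightarrow>
     (\<forall>A. A \<noteq> {} \<longrightarrow> A \<subseteq> Pow u \<longrightarrow> E (\<Inter>A) = \<Inter>(E ` A))"

definition compl_in :: "'a set \<Rightarrow> 'a set \<Rightarrow> 'a set" where
  "compl_in u a = u - a"

definition grd :: "'a set \<Rightarrow> ('a set \<Rightarrow> 'a set) \<Rightarrow> 'a set" where
  "grd u E = compl_in u (E {})"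

definition lfp_on :: "'a set \<Rightarrow> ('a set \<Rightarrow> 'a set) \<Rightarrow> 'a set" where
  "lfp_on u f = u \<inter> \<Inter>{Y. Y \<subseteq> u \<and> f Y \<subseteq> Y}"

definition gfp_on :: "'a set \<Rightarrow> ('a set \<Rightarrow> 'a set) \<Rightarrow> 'a set" where
  "gfp_on u f = \<Union>{Y. Y \<subseteq> u \<and> Y \<subseteq> f Y}"

text \<open>Liberal part and termination set of the fair iteration X(q).\<close>
definition fair_lib :: "'a set \<Rightarrow> ('a set \<Rightarrow> 'a set) \<Rightarrow> ('a set \<Rightarrow> 'a set) \<Rightarrow> 'a set \<Rightarrow> 'a set \<Rightarrow> 'a set" where
  "fair_lib u F G q r = gfp_on u (\<lambda>Y. q \<union> (G r \<inter> F Y))"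

definition fair_pre :: "'a set \<Rightarrow> ('a set \<Rightarrow> 'a set) \<Rightarrow> ('a set \<Rightarrow> 'a set) \<Rightarrow> 'a set \<Rightarrow> 'a set" where
  "fair_pre u F G q = lfp_on u (\<lambda>Y. q \<union> grd u G \<union> F Y)"

definition fair_iter :: "'a set \<Rightarrow> ('a set \<Rightarrow> 'a set) \<Rightarrow> ('a set \<Rightarrow> 'a set) \<Rightarrow> 'a set \<Rightarrow> 'a set \<Rightarrow> 'a set" where
  "fair_iter u F G q r = fair_lib u F G q r \<inter> fair_pre u F G q"

end

theory Submission
  imports Defs
begin

text \<open>The set \<open>p \<union> q\<close> is a post-fixpoint of the liberal map \<open>Y \<mapsto> q \<union> (G q \<inter> F Y)\<close>,
  so it lies below its greatest fixpoint; and it is contained in \<open>q \<union> grd G\<close>, which lies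
  below every pre-fixpoint of the termination map.\<close>

lemma subset_gfp_onI:
  assumes "Y \<subseteq> u" and "Y \<subseteq> f Y"
  shows "Y \<subseteq> gfp_on u f"
  using assms unfolding gfp_on_def by blast

lemma subset_lfp_onI:
  assumes "a \<subseteq> u" and "\<And>Y. Y \<subseteq> u \<Longrightarrow> f Y \<subseteq> Y \<Longrightarrow> a \<subseteq> Y"
  shows "a \<subseteq> lfp_on u f"
  using assms unfolding lfp_on_def by blast

lemma subset_fair_lib:
  assumes "a \<subseteq> u" and "a \<subseteq> q \<union> (G r \<inter> F a)"
  shows "a \<subseteq> fair_lib u F G q r"
  unfolding fair_lib_def using assms by (rule subset_gfp_onI)

lemma subset_fair_pre:
  assumes "a \<subseteq> u" and "a \<subseteq> q \<union> grd u G"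
  shows "a \<subseteq> fair_pre u F G q"
  unfolding fair_pre_def
proof (rule subset_lfp_onI[OF assms(1)])
  fix Y assume "q \<union> grd u G \<union> F Y \<subseteq> Y"
  with assms(2) show "a \<subseteq> Y" by blast
qed

theorem lemma2:
  fixes u p q :: "'a set" and F G :: "'a set \<Rightarrow> 'a set"
  assumes "set_transformer u F" and "set_transformer u G"
    and "conjunctive u F" and "conjunctive u G"
    and "F u = u" and "G u = u"
    and "p \<subseteq> u" and "q \<subseteq> u"
    and "p \<inter> compl_in u q \<subseteq> F (p \<union> q)"
    and "p \<inter> compl_in u q \<subseteq> grd u G"
    and "p \<inter> compl_in u q \<subseteq> G q"
  shows "p \<union> q \<subseteq> fair_iter u F G q q"
proof -
  have in_u: "p \<union> q \<subseteq> u"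
    using assms(7,8) by blast
  have "p \<union> q \<subseteq> q \<union> (G q \<inter> F (p \<union> q))"
    using assms(7,9,11) unfolding compl_in_def by blast
  then have lib: "p \<union> q \<subseteq> fair_lib u F G q q"
    by (rule subset_fair_lib[OF in_u])
  have "p \<union> q \<subseteq> q \<union> grd u G"
    using assms(7,10) unfolding compl_in_def by blast
  then have pre: "p \<union> q \<subseteq> fair_pre u F G q"
    by (rule subset_fair_pre[OF in_u])
  from lib pre show ?thesis
    unfolding fair_iter_def by blast
qed

end
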